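(* Consider the two-layer multi-item order fulfillment problem described in the context with a single FDC ($K=1$), fixed costs $f_0\ge f_1\ge 0$, and variable costs satisfying $a\le c_{k,t}^i\le b$ for constants $b>a>0$. For parameters $\eta\ge1$, $\theta\ge0$, let \textsc{Order-Size AdjV-Priority} be the following policy. In each period $t$, for each item $i$, set $\hat m_{1,t}^i=\min\{S_t^i,I_{1,t-1}^i\}$ if $c_{1,t}^i<c_{0,t}^i/\eta$ and $\hat m_{1,t}^i=0$ otherwise, and $\hat m_{0,t}^i=S_t^i-\hat m_{1,t}^i$. If $\sum_{i=1}^nS_t^i\le\theta$ and $I_{1,t-1}^i\ge S_t^i$ for all $i\in[n]$, fulfill the whole order from the FDC ($m_{1,t}^i=S_t^i$, $m_{0,t}^i=0$); otherwise set $m_{k,t}^i=\hat m_{k,t}^i$. If $\eta=\sqrt{\max\{f_0/2,\,b\}/a}$ and $\theta=\frac{f_0}{2a\eta}$, then \[\mathfrak R(\textsc{Order-Size AdjV-Priority})\le(4+\sqrt2)\sqrt{\frac{\max\{f_0/2,\ b\}}{a}}.\]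
   Context: Problem with one FDC (index $1$) and one RDC (index $0$, unlimited inventory). The FDC initially holds $I_{1,0}^i\ge0$ units of item $i\in[n]$, never replenished. In periods $t=1,\dots,T$ an order $\boldsymbol S_t=(S_t^i)_i$ of nonnegative integers arrives; after observing it and the variable costs $c_{k,t}^i$, the policy must immediately and irrevocably choose $m_{0,t}^i,m_{1,t}^i\ge0$ with $m_{0,t}^i+m_{1,t}^i=S_t^i$ and $m_{1,t}^i\le I_{1,t-1}^i$, where $I_{1,t}^i=I_{1,0}^i-\sum_{\tau\le t}m_{1,\tau}^i$. Period cost $\sum_{k=0,1}[f_k\mathbb{I}(\sum_im_{k,t}^i>0)+\sum_ic_{k,t}^im_{k,t}^i]$; total cost is the sum over periods. Online policies decide in period $t$ using only fixed costs, initial inventories and orders/variable costs up to $t$ (and the known constants $a,b$). $\mathrm{ALG}(I)$: (expected) total cost; $\mathrm{OPT}(I)$: offline optimal total cost. $\mathfrak R(\mathrm{ALG})$ is the supremum of $\mathrm{ALG}(I)/\mathrm{OPT}(I)$ over all $n,T$, initial inventories, variable costs in $[a,b]$ and order sequences. *)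

theory Defs
  imports Complex_Main
begin

text \<open>Items are indexed by i < n, periods by t in {1..T},
  warehouses by k in {0,1} (0 = RDC, 1 = FDC).
  I0 i   : initial FDC inventory of item i,
  S t i  : order quantity of item i in period t,
  c k t i: variable cost of shipping one unit of item i from k in period t.\<close>

definition fixed_cost :: "real \<Rightarrow> real \<Rightarrow> nat \<Rightarrow> real" where
  "fixed_cost f0 f1 k = (if k = 0 then f0 else f1)"

definition plan_cost ::
  "real \<Rightarrow> real \<Rightarrow> nat \<Rightarrow> nat \<Rightarrow> (nat \<Rightarrow> nat \<Rightarrow> nat \<Rightarrow> real)
   \<Rightarrow> (nat \<Rightarrow> nat \<Rightarrow> nat \<Rightarrow> nat) \<Rightarrow> real" where
  "plan_cost f0 f1 n T c m =
     (\<Sum>t\<in>{1..T}. \<Sum>k\<in>{0::nat,1}.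
        fixed_cost f0 f1 k * (if (\<Sum>i<n. m k t i) > 0 then 1 else 0)
        + (\<Sum>i<n. c k t i * real (m k t i)))"

text \<open>Feasibility: orders fully served, FDC shipments bounded by remaining FDC inventory
  I_{1,t-1}^i = I0 i - sum_{tau<t} m 1 tau i.\<close>
definition feasible ::
  "nat \<Rightarrow> nat \<Rightarrow> (nat \<Rightarrow> nat) \<Rightarrow> (nat \<Rightarrow> nat \<Rightarrow> nat) \<Rightarrow> (nat \<Rightarrow> nat \<Rightarrow> nat \<Rightarrow> nat) \<Rightarrow> bool" where
  "feasible n T I0 S m \<longleftrightarrow>
     (\<forall>t\<in>{1..T}. \<forall>i<n.
        m 0 t i + m 1 t i = S t i \<and>
        (\<Sum>\<tau>\<in>{1..t}. m 1 \<tau> i) \<le> I0 i)"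

definition opt_cost ::
  "real \<Rightarrow> real \<Rightarrow> nat \<Rightarrow> nat \<Rightarrow> (nat \<Rightarrow> nat) \<Rightarrow> (nat \<Rightarrow> nat \<Rightarrow> nat)
   \<Rightarrow> (nat \<Rightarrow> nat \<Rightarrow> nat \<Rightarrow> real) \<Rightarrow> real" where
  "opt_cost f0 f1 n T I0 S c = Inf {plan_cost f0 f1 n T c m | m. feasible n T I0 S m}"

text \<open>Order-Size AdjV-Priority. cur i is the current FDC inventory I_{1,t-1}^i.\<close>
definition hat_m1 ::
  "real \<Rightarrow> (nat \<Rightarrow> nat \<Rightarrow> nat) \<Rightarrow> (nat \<Rightarrow> nat \<Rightarrow> nat \<Rightarrow> real) \<Rightarrow> (nat \<Rightarrow> nat) \<Rightarrow> nat \<Rightarrow> nat \<Rightarrow> nat" where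
  "hat_m1 eta S c cur t i = (if c 1 t i < c 0 t i / eta then min (S t i) (cur i) else 0)"

definition osa_m1 ::
  "real \<Rightarrow> real \<Rightarrow> nat \<Rightarrow> (nat \<Rightarrow> nat \<Rightarrow> nat) \<Rightarrow> (nat \<Rightarrow> nat \<Rightarrow> nat \<Rightarrow> real) \<Rightarrow> (nat \<Rightarrow> nat) \<Rightarrow> nat \<Rightarrow> nat \<Rightarrow> nat" where
  "osa_m1 eta theta n S c cur t i =
     (if real (\<Sum>j<n. S t j) \<le> theta \<and> (\<forall>j<n. S t j \<le> cur j) then S t i
      else hat_m1 eta S c cur t i)"

text \<open>osa_inv ... t = FDC inventory after period t under the policy.\<close>
fun osa_inv ::
  "real \<Rightarrow> real \<Rightarrow> nat \<Rightarrow> (nat \<Rightarrow> nat) \<Rightarrow> (nat \<Rightarrow> nat \<Rightarrow> nat) \<Rightarrow> (nat \<Rightarrow> nat \<Rightarrow> nat \<Rightarrow> real) \<Rightarrow> nat \<Rightarrow> nat \<Rightarrow> nat" where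
  "osa_inv eta theta n I0 S c 0 = I0"
| "osa_inv eta theta n I0 S c (Suc t) =
     (\<lambda>i. osa_inv eta theta n I0 S c t i - osa_m1 eta theta n S c (osa_inv eta theta n I0 S c t) (Suc t) i)"

definition osa_plan ::
  "real \<Rightarrow> real \<Rightarrow> nat \<Rightarrow> (nat \<Rightarrow> nat) \<Rightarrow> (nat \<Rightarrow> nat \<Rightarrow> nat) \<Rightarrow> (nat \<Rightarrow> nat \<Rightarrow> nat \<Rightarrow> real) \<Rightarrow> nat \<Rightarrow> nat \<Rightarrow> nat \<Rightarrow> nat" where
  "osa_plan eta theta n I0 S c k t i =
     (let m1 = osa_m1 eta theta n S c (osa_inv eta theta n I0 S c (t - 1)) t i
      in if k = 0 then S t i - m1 else m1)"

definition osa_cost ::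
  "real \<Rightarrow> real \<Rightarrow> real \<Rightarrow> real \<Rightarrow> nat \<Rightarrow> nat \<Rightarrow> (nat \<Rightarrow> nat) \<Rightarrow> (nat \<Rightarrow> nat \<Rightarrow> nat)
   \<Rightarrow> (nat \<Rightarrow> nat \<Rightarrow> nat \<Rightarrow> real) \<Rightarrow> real" where
  "osa_cost eta theta f0 f1 n T I0 S c = plan_cost f0 f1 n T c (osa_plan eta theta n I0 S c)"

end

theory Submission
  imports Defs
begin

(* Amortised comparison with an arbitrary feasible plan x, in particular an optimal one. Let y be
  the policy's plan, I_t its FDC stock and kappa = b - a + f0. In every period
    cost(y_t) + kappa * sum_i (y_t^i - x_t^i)^+  <=  5 eta cost(x_t) + kappa * sum_i (x_t^i - I_{t-1}^i)^+.
  If the whole order is small and served by the FDC, the threshold theta = f0 / (2 a eta) makes the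
  excess term at most 2 eta times the RDC fixed cost that x pays whenever it leaves an excess.
  Otherwise the item-wise rule c_1 < c_0 / eta and eta^2 a >= max (f0/2, b) bound the variable
  cost plus the excess term by 3 eta times the variable cost of x, while the RDC fixed cost of y is
  paid by the fixed cost of x, by the variable cost of a large order (theta again) or by a
  shortfall. Both plans draw on the same initial stock, so the total shortfall never exceeds the
  total excess, and summing over the periods gives ALG <= 5 eta OPT <= (4 + sqrt 2) eta OPT. *)

lemma le_mult_of_one_le: "0 \<le> z \<Longrightarrow> 1 \<le> e \<Longrightarrow> z \<le> e * (z::real)"
  by (simp add: mult_le_cancel_right1)

definition period_fixed_cost :: "real \<Rightarrow> real \<Rightarrow> nat \<Rightarrow> (nat \<Rightarrow> nat) \<Rightarrow> (nat \<Rightarrow> nat) \<Rightarrow> real"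
  where "period_fixed_cost f0 f1 n s m1 =
     (if 0 < (\<Sum>i<n. s i - m1 i) then f0 else 0) + (if 0 < (\<Sum>i<n. m1 i) then f1 else 0)"

definition period_var_cost ::
  "nat \<Rightarrow> (nat \<Rightarrow> real) \<Rightarrow> (nat \<Rightarrow> real) \<Rightarrow> (nat \<Rightarrow> nat) \<Rightarrow> (nat \<Rightarrow> nat) \<Rightarrow> real"
  where "period_var_cost n c0 c1 s m1 = (\<Sum>i<n. c0 i * real (s i - m1 i) + c1 i * real (m1 i))"

definition period_cost :: "real \<Rightarrow> real \<Rightarrow> nat \<Rightarrow> (nat \<Rightarrow> real) \<Rightarrow> (nat \<Rightarrow> real)
    \<Rightarrow> (nat \<Rightarrow> nat) \<Rightarrow> (nat \<Rightarrow> nat) \<Rightarrow> real"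
  where "period_cost f0 f1 n c0 c1 s m1 = period_fixed_cost f0 f1 n s m1 + period_var_cost n c0 c1 s m1"

lemma plan_cost_eq_sum_period_cost:
  assumes "feasible n T I0 S m"
  shows "plan_cost f0 f1 n T c m = (\<Sum>t\<in>{1..T}. period_cost f0 f1 n (c 0 t) (c 1 t) (S t) (m 1 t))"
  unfolding plan_cost_def
proof (intro sum.cong refl)
  fix t assume t: "t \<in> {1..T}"
  have "m 0 t i = S t i - m 1 t i" if "i < n" for i
    using assms t that unfolding feasible_def by (auto intro: add_implies_diff)
  then have "(\<Sum>i<n. m 0 t i) = (\<Sum>i<n. S t i - m 1 t i)"
    and "(\<Sum>i<n. c 0 t i * real (m 0 t i)) = (\<Sum>i<n. c 0 t i * real (S t i - m 1 t i))"
    by simp_all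
  then show "(\<Sum>k\<in>{0, 1}. fixed_cost f0 f1 k * (if 0 < (\<Sum>i<n. m k t i) then 1 else 0)
               + (\<Sum>i<n. c k t i * real (m k t i)))
           = period_cost f0 f1 n (c 0 t) (c 1 t) (S t) (m 1 t)"
    unfolding period_cost_def period_fixed_cost_def period_var_cost_def fixed_cost_def
    by (simp add: sum.distrib)
qed

lemma period_fixed_cost_nonneg: "0 \<le> f0 \<Longrightarrow> 0 \<le> f1 \<Longrightarrow> 0 \<le> period_fixed_cost f0 f1 n s m1"
  unfolding period_fixed_cost_def by simp

lemma period_var_cost_nonneg:
  "(\<And>i. i < n \<Longrightarrow> 0 \<le> c0 i \<and> 0 \<le> c1 i) \<Longrightarrow> 0 \<le> period_var_cost n c0 c1 s m1"
  unfolding period_var_cost_def by (auto intro!: sum_nonneg)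

lemma period_cost_nonneg:
  "0 \<le> f0 \<Longrightarrow> 0 \<le> f1 \<Longrightarrow> (\<And>i. i < n \<Longrightarrow> 0 \<le> c0 i \<and> 0 \<le> c1 i)
    \<Longrightarrow> 0 \<le> period_cost f0 f1 n c0 c1 s m1"
  unfolding period_cost_def by (intro add_nonneg_nonneg period_fixed_cost_nonneg period_var_cost_nonneg)

lemma f0_le_period_fixed_cost:
  "0 \<le> f1 \<Longrightarrow> 0 < (\<Sum>i<n. s i - m1 i) \<Longrightarrow> f0 \<le> period_fixed_cost f0 f1 n s m1"
  unfolding period_fixed_cost_def by simp

lemma f1_le_period_fixed_cost:
  assumes "0 \<le> f1" "f1 \<le> f0" "i < n" "0 < s i"
  shows "f1 \<le> period_fixed_cost f0 f1 n s m1"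
proof (cases "0 < (\<Sum>i<n. s i - m1 i)")
  case True
  then show ?thesis using f0_le_period_fixed_cost[OF assms(1)] assms(2) by (meson order_trans)
next
  case False
  then have "s i \<le> m1 i" using assms(3) by simp
  moreover have "m1 i \<le> (\<Sum>i<n. m1 i)" using assms(3) by (intro member_le_sum) auto
  ultimately have "0 < (\<Sum>i<n. m1 i)" using assms(4) by linarith
  then show ?thesis using assms(1) False unfolding period_fixed_cost_def by simp
qed

lemma fdc_fixed_cost_le_period_fixed_cost:
  assumes "0 \<le> f1" "f1 \<le> f0" "\<And>i. i < n \<Longrightarrow> y i \<le> s i"
  shows "(if 0 < (\<Sum>i<n. y i) then f1 else 0) \<le> period_fixed_cost f0 f1 n s m1"
proof (cases "0 < (\<Sum>i<n. y i)")
  case True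
  then obtain i where "i < n" "0 < y i"
    by (metis gr0I lessThan_iff sum.neutral)
  then have "f1 \<le> period_fixed_cost f0 f1 n s m1"
    using assms by (intro f1_le_period_fixed_cost) (auto intro: less_le_trans)
  then show ?thesis using True by simp
qed (use assms period_fixed_cost_nonneg in simp)

lemma period_var_cost_ge:
  assumes "\<And>i. i < n \<Longrightarrow> a \<le> c0 i \<and> a \<le> c1 i" "\<And>i. i < n \<Longrightarrow> m1 i \<le> s i"
  shows "a * real (\<Sum>i<n. s i) \<le> period_var_cost n c0 c1 s m1"
proof -
  have "a * real (s i) \<le> c0 i * real (s i - m1 i) + c1 i * real (m1 i)" if "i < n" for i
  proof -
    have "a * real (s i) = a * real (s i - m1 i) + a * real (m1 i)"
      using assms(2)[OF that] by (simp add: algebra_simps)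
    also have "\<dots> \<le> c0 i * real (s i - m1 i) + c1 i * real (m1 i)"
      using assms(1)[OF that] by (intro add_mono mult_right_mono) auto
    finally show ?thesis .
  qed
  then show ?thesis
    unfolding period_var_cost_def by (auto simp: sum_distrib_left intro!: sum_mono)
qed

lemma period_var_cost_fdc_all_le:
  assumes "\<And>i. i < n \<Longrightarrow> 0 \<le> c0 i \<and> c1 i \<le> b" "\<And>i. i < n \<Longrightarrow> m1 i \<le> s i"
  shows "period_var_cost n c0 c1 s s \<le> period_var_cost n c0 c1 s m1 + b * real (\<Sum>i<n. s i - m1 i)"
proof -
  have "c1 i * real (s i) \<le> (c0 i * real (s i - m1 i) + c1 i * real (m1 i)) + b * real (s i - m1 i)"
    if "i < n" for i
  proof -
    have "c1 i * real (s i) = c1 i * real (s i - m1 i) + c1 i * real (m1 i)"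
      using assms(2)[OF that] by (simp add: algebra_simps)
    moreover have "c1 i * real (s i - m1 i) \<le> b * real (s i - m1 i)"
      using assms(1)[OF that] by (intro mult_right_mono) auto
    moreover have "0 \<le> c0 i * real (s i - m1 i)"
      using assms(1)[OF that] by simp
    ultimately show ?thesis by linarith
  qed
  then have "(\<Sum>i<n. c0 i * real (s i - s i) + c1 i * real (s i))
      \<le> (\<Sum>i<n. (c0 i * real (s i - m1 i) + c1 i * real (m1 i)) + b * real (s i - m1 i))"
    by (intro sum_mono) simp
  then show ?thesis
    unfolding period_var_cost_def by (simp add: sum.distrib sum_distrib_left)
qed

lemma feasible_rdc_only: "feasible n T I0 S (\<lambda>k t i. if k = 0 then S t i else 0)"
  unfolding feasible_def by simp

lemma plan_cost_nonneg:
  assumes "feasible n T I0 S m" "0 \<le> f0" "0 \<le> f1"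
    and "\<And>k t i. k \<in> {0, 1} \<Longrightarrow> t \<in> {1..T} \<Longrightarrow> i < n \<Longrightarrow> 0 \<le> c k t i"
  shows "0 \<le> plan_cost f0 f1 n T c m"
  unfolding plan_cost_eq_sum_period_cost[OF assms(1)]
  using assms(2-) by (auto intro!: sum_nonneg period_cost_nonneg)

lemma opt_cost_nonneg:
  assumes "0 \<le> f0" "0 \<le> f1"
    and "\<And>k t i. k \<in> {0, 1} \<Longrightarrow> t \<in> {1..T} \<Longrightarrow> i < n \<Longrightarrow> 0 \<le> c k t i"
  shows "0 \<le> opt_cost f0 f1 n T I0 S c"
proof -
  have "0 \<le> plan_cost f0 f1 n T c m" if "feasible n T I0 S m" for m
    using that assms by (rule plan_cost_nonneg)
  then show ?thesis
    unfolding opt_cost_def using feasible_rdc_only[of n T I0 S] by (intro cInf_greatest) auto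
qed

lemma le_mult_opt_cost:
  fixes K C :: real
  assumes "0 < K" and "\<And>m. feasible n T I0 S m \<Longrightarrow> C \<le> K * plan_cost f0 f1 n T c m"
  shows "C \<le> K * opt_cost f0 f1 n T I0 S c"
proof -
  have "C / K \<le> opt_cost f0 f1 n T I0 S c"
    unfolding opt_cost_def using feasible_rdc_only[of n T I0 S] assms
    by (intro cInf_greatest) (auto simp: pos_divide_le_eq mult.commute)
  then show ?thesis using assms(1) by (simp add: pos_divide_le_eq mult.commute)
qed

lemma shortfall_le_excess:
  fixes x y stock :: "nat \<Rightarrow> nat" and I :: nat
  assumes stock: "\<And>t. stock t + (\<Sum>\<tau>\<in>{1..t}. y \<tau>) = I"
    and budget: "\<And>t. t \<in> {1..T} \<Longrightarrow> (\<Sum>\<tau>\<in>{1..t}. x \<tau>) \<le> I"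
  shows "(\<Sum>t\<in>{1..T}. x t - stock (t - 1)) \<le> (\<Sum>t\<in>{1..T}. y t - x t)"
proof -
  have "(\<Sum>t\<in>{1..T}. x t - stock (t - 1)) + ((\<Sum>\<tau>\<in>{1..T}. y \<tau>) - (\<Sum>\<tau>\<in>{1..T}. x \<tau>))
        \<le> (\<Sum>t\<in>{1..T}. y t - x t)"
    using budget
  proof (induction T)
    case (Suc T)
    have "(\<Sum>\<tau>\<in>{1..T}. y \<tau>) + y (Suc T) \<le> I"
      using stock[of "Suc T"] by simp
    moreover have "(\<Sum>\<tau>\<in>{1..T}. x \<tau>) + x (Suc T) \<le> I"
      using Suc.prems[of "Suc T"] by simp
    ultimately show ?case
      using Suc stock[of T] by simp
  qed simp
  then show ?thesis by simp
qed

lemma osa_m1_le: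
  assumes "i < n"
  shows "osa_m1 eta theta n S c cur t i \<le> S t i" "osa_m1 eta theta n S c cur t i \<le> cur i"
  using assms unfolding osa_m1_def hat_m1_def by auto

lemma osa_plan_fdc:
  "osa_plan eta theta n I0 S c 1 t = osa_m1 eta theta n S c (osa_inv eta theta n I0 S c (t - 1)) t"
  by (simp add: osa_plan_def fun_eq_iff)

lemma osa_inv_add_shipped:
  assumes "i < n"
  shows "osa_inv eta theta n I0 S c t i + (\<Sum>\<tau>\<in>{1..t}. osa_plan eta theta n I0 S c 1 \<tau> i) = I0 i"
proof (induction t)
  case (Suc t)
  then show ?case
    using osa_m1_le(2)[OF assms, of eta theta S c "osa_inv eta theta n I0 S c t" "Suc t"]
    by (simp add: osa_plan_def)
qed simp

lemma osa_plan_feasible: "feasible n T I0 S (osa_plan eta theta n I0 S c)"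
  unfolding feasible_def
proof (intro ballI allI impI conjI)
  fix t i assume "i < n"
  then show "osa_plan eta theta n I0 S c 0 t i + osa_plan eta theta n I0 S c 1 t i = S t i"
    using osa_m1_le(1) by (simp add: osa_plan_def Let_def)
  show "(\<Sum>\<tau>\<in>{1..t}. osa_plan eta theta n I0 S c 1 \<tau> i) \<le> I0 i"
    using osa_inv_add_shipped[OF \<open>i < n\<close>] le_add2 by metis
qed

lemma osa_shortfall_le_excess:
  assumes "feasible n T I0 S m"
  shows "(\<Sum>t\<in>{1..T}. \<Sum>i<n. m 1 t i - osa_inv eta theta n I0 S c (t - 1) i)
       \<le> (\<Sum>t\<in>{1..T}. \<Sum>i<n. osa_plan eta theta n I0 S c 1 t i - m 1 t i)"
proof -
  have "(\<Sum>t\<in>{1..T}. m 1 t i - osa_inv eta theta n I0 S c (t - 1) i)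
      \<le> (\<Sum>t\<in>{1..T}. osa_plan eta theta n I0 S c 1 t i - m 1 t i)" if "i < n" for i
    using osa_inv_add_shipped[OF that] assms that unfolding feasible_def
    by (intro shortfall_le_excess) auto
  then show ?thesis
    by (subst (1 2) sum.swap) (rule sum_mono, simp)
qed

lemma greedy_fdc_item_bound:
  fixes c0 c1 k e d :: real and s x cur :: nat
  assumes "c1 + k \<le> e * c0" "0 \<le> c1" "c1 \<le> c0" "c0 - c1 \<le> d" "1 \<le> e" "x \<le> s"
  shows "c0 * real (s - min s cur) + c1 * real (min s cur) + k * real (min s cur - x)
         \<le> e * (c0 * real (s - x) + c1 * real x) + d * real (x - cur)"
proof (cases "x \<le> min s cur")
  case True
  define h where "h = min s cur"
  have "h \<le> s" "x \<le> h" "x - cur = 0" using True unfolding h_def by auto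
  then have diffs: "real (s - h) = real s - real h" "real (h - x) = real h - real x"
    "real (s - x) = real s - real x" by simp_all
  have "c0 * real (s - h) + c1 * real h + k * real (h - x)
        = c0 * real (s - h) + c1 * real x + (c1 + k) * real (h - x)"
    unfolding diffs by (simp add: algebra_simps)
  also have "\<dots> \<le> e * (c0 * real (s - h)) + e * (c1 * real x) + e * c0 * real (h - x)"
    using assms by (intro add_mono le_mult_of_one_le mult_right_mono) auto
  also have "\<dots> = e * (c0 * real (s - x) + c1 * real x) + d * real (x - cur)"
    unfolding diffs \<open>x - cur = 0\<close> by (simp add: algebra_simps)
  finally show ?thesis unfolding h_def .
next
  case False
  then have "min s cur = cur" "cur < x" using assms(6) by auto
  moreover have "real (s - cur) = real s - real cur" "real (s - x) = real s - real x"
    "real (x - cur) = real x - real cur" "min s cur - x = 0"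
    using \<open>cur < x\<close> assms(6) by simp_all
  ultimately have "c0 * real (s - min s cur) + c1 * real (min s cur) + k * real (min s cur - x)
        = (c0 * real (s - x) + c1 * real x) + (c0 - c1) * real (x - cur)"
    by (simp add: algebra_simps)
  also have "\<dots> \<le> e * (c0 * real (s - x) + c1 * real x) + d * real (x - cur)"
    using assms by (intro add_mono le_mult_of_one_le mult_right_mono) auto
  finally show ?thesis .
qed

locale adjv_parameters =
  fixes a b f0 f1 eta theta :: real
  assumes a_pos: "0 < a" and a_le_b: "a \<le> b"
    and f1_nonneg: "0 \<le> f1" and f1_le_f0: "f1 \<le> f0"
    and eta_ge_1: "1 \<le> eta" and b_le: "b \<le> eta\<^sup>2 * a" and f0_le: "f0 \<le> 2 * eta\<^sup>2 * a"
    and theta_eq: "theta = f0 / (2 * a * eta)"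
begin

text \<open>A unit of FDC stock that the policy uses beyond the comparison plan can later force it to
  ship from the RDC a unit that the comparison plan ships from the FDC: this costs at most
  \<open>b - a\<close> more in variable cost, plus possibly the RDC fixed cost \<open>f0\<close>.\<close>

abbreviation kappa :: real where "kappa \<equiv> b - a + f0"

lemma eta_pos: "0 < eta"
  using eta_ge_1 by simp

lemma f0_nonneg: "0 \<le> f0"
  using f1_nonneg f1_le_f0 by simp

lemma bounded_period_var_cost_nonneg:
  assumes "\<And>i. i < n \<Longrightarrow> c0 i \<in> {a..b} \<and> c1 i \<in> {a..b}"
  shows "0 \<le> period_var_cost n c0 c1 s m1"
proof (rule period_var_cost_nonneg)
  fix i assume "i < n"
  then show "0 \<le> c0 i \<and> 0 \<le> c1 i" using assms[of i] a_pos by auto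
qed

lemma fdc_priority_ineq:
  assumes "a \<le> c1" "c1 < c0 / eta"
  shows "c1 + kappa \<le> 3 * eta * c0"
proof -
  have "1 \<le> eta\<^sup>2" using eta_ge_1 by (simp add: one_le_power)
  then have "c1 - a \<le> eta\<^sup>2 * (c1 - a)" using assms(1) by (intro le_mult_of_one_le) auto
  moreover have "eta\<^sup>2 * a \<le> eta\<^sup>2 * c1" using assms(1) by (simp add: mult_left_mono)
  ultimately have "c1 + kappa \<le> 3 * eta * (eta * c1)"
    using b_le f0_le by (simp add: algebra_simps power2_eq_square)
  also have "\<dots> \<le> 3 * eta * c0"
    using assms(2) eta_pos by (simp add: pos_less_divide_eq mult.commute)
  finally show ?thesis .
qed

lemma hat_item_bound:
  fixes c0 c1 :: real and s x cur :: nat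
  assumes "c0 \<in> {a..b}" "c1 \<in> {a..b}" "x \<le> s"
  defines "h \<equiv> if c1 < c0 / eta then min s cur else 0"
  shows "c0 * real (s - h) + c1 * real h + kappa * real (h - x)
         \<le> 3 * eta * (c0 * real (s - x) + c1 * real x) + (b - a) * real (x - cur)"
proof (cases "c1 < c0 / eta")
  case True
  have "c1 \<le> eta * c1" using assms(2) a_pos eta_ge_1 by (intro le_mult_of_one_le) auto
  also have "\<dots> < c0" using True eta_pos by (simp add: pos_less_divide_eq mult.commute)
  finally have "c1 \<le> c0" by simp
  moreover have "c1 + kappa \<le> 3 * eta * c0" using True assms(2) by (intro fdc_priority_ineq) auto
  moreover have "h = min s cur" using True unfolding h_def by simp
  ultimately show ?thesis
    using greedy_fdc_item_bound[of c1 kappa "3 * eta" c0 "b - a" x s cur] assms a_pos eta_ge_1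
    by auto
next
  case False
  then have "c0 \<le> eta * c1" using eta_pos by (simp add: pos_less_divide_eq mult.commute)
  also have "\<dots> \<le> 3 * eta * c1" using assms(2) a_pos eta_pos by simp
  finally have "c0 * real x \<le> 3 * eta * c1 * real x" by (simp add: mult_right_mono)
  moreover have "c0 * real (s - x) \<le> 3 * eta * (c0 * real (s - x))"
    using assms(1) a_pos eta_ge_1 by (intro le_mult_of_one_le) auto
  moreover have "c0 * real s = c0 * real (s - x) + c0 * real x"
    using assms(3) by (simp add: algebra_simps)
  moreover have "0 \<le> (b - a) * real (x - cur)" using a_le_b by simp
  ultimately show ?thesis
    unfolding h_def using False by (simp add: algebra_simps)
qed

lemma hat_var_cost_bound:
  assumes costs: "\<And>i. i < n \<Longrightarrow> c0 i \<in> {a..b} \<and> c1 i \<in> {a..b}"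
    and x: "\<And>i. i < n \<Longrightarrow> x i \<le> s i"
    and y: "\<And>i. y i = (if c1 i < c0 i / eta then min (s i) (cur i) else 0)"
  shows "period_var_cost n c0 c1 s y + kappa * real (\<Sum>i<n. y i - x i)
         \<le> 3 * eta * period_var_cost n c0 c1 s x + (b - a) * real (\<Sum>i<n. x i - cur i)"
proof -
  have "(\<Sum>i<n. c0 i * real (s i - y i) + c1 i * real (y i) + kappa * real (y i - x i))
        \<le> (\<Sum>i<n. 3 * eta * (c0 i * real (s i - x i) + c1 i * real (x i))
                  + (b - a) * real (x i - cur i))"
    unfolding y using costs x by (intro sum_mono hat_item_bound) auto
  then show ?thesis
    unfolding period_var_cost_def by (simp add: sum.distrib sum_distrib_left distrib_left)
qed

lemma f0_le_if_not_small_order: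
  assumes costs: "\<And>i. i < n \<Longrightarrow> c0 i \<in> {a..b} \<and> c1 i \<in> {a..b}"
    and x: "\<And>i. i < n \<Longrightarrow> x i \<le> s i"
    and not_small: "\<not> (real (\<Sum>i<n. s i) \<le> theta \<and> (\<forall>i<n. s i \<le> cur i))"
  shows "f0 \<le> period_fixed_cost f0 f1 n s x + 2 * eta * period_var_cost n c0 c1 s x
               + f0 * real (\<Sum>i<n. x i - cur i)"
proof -
  have F: "0 \<le> period_fixed_cost f0 f1 n s x"
    using f0_nonneg f1_nonneg by (rule period_fixed_cost_nonneg)
  have V: "0 \<le> 2 * eta * period_var_cost n c0 c1 s x"
    using eta_pos bounded_period_var_cost_nonneg[OF costs] by simp
  have D: "0 \<le> f0 * real (\<Sum>i<n. x i - cur i)"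
    using f0_nonneg by (intro mult_nonneg_nonneg of_nat_0_le_iff)
  show ?thesis
  proof (cases "0 < (\<Sum>i<n. s i - x i)")
    case True
    then show ?thesis using f0_le_period_fixed_cost[OF f1_nonneg] V D by (meson add_increasing2)
  next
    case False
    then have x_eq: "x i = s i" if "i < n" for i
      using x[OF that] that by (simp add: le_antisym)
    show ?thesis
    proof (cases "real (\<Sum>i<n. s i) \<le> theta")
      case True
      with not_small obtain j where "j < n" "cur j < x j"
        using x_eq by (auto simp: not_le)
      then have "1 \<le> (\<Sum>i<n. x i - cur i)"
        using member_le_sum[of j "{..<n}" "\<lambda>i. x i - cur i"] by simp
      then have "f0 \<le> f0 * real (\<Sum>i<n. x i - cur i)"
        using f0_nonneg by (simp add: mult_le_cancel_left1 del: of_nat_sum)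
      then show ?thesis using F V by linarith
    next
      case False
      have "f0 = 2 * eta * (a * theta)" using theta_eq a_pos eta_pos by simp
      also have "\<dots> \<le> 2 * eta * (a * real (\<Sum>i<n. s i))"
        using False a_pos eta_pos by simp
      also have "\<dots> \<le> 2 * eta * period_var_cost n c0 c1 s x"
        using eta_pos by (intro mult_left_mono period_var_cost_ge) (use costs x in auto)
      finally show ?thesis using F D by linarith
    qed
  qed
qed

lemma hat_fixed_cost_bound:
  assumes costs: "\<And>i. i < n \<Longrightarrow> c0 i \<in> {a..b} \<and> c1 i \<in> {a..b}"
    and x: "\<And>i. i < n \<Longrightarrow> x i \<le> s i"
    and not_small: "\<not> (real (\<Sum>i<n. s i) \<le> theta \<and> (\<forall>i<n. s i \<le> cur i))"
    and y: "\<And>i. y i \<le> s i"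
  shows "period_fixed_cost f0 f1 n s y \<le> 2 * period_fixed_cost f0 f1 n s x
           + 2 * eta * period_var_cost n c0 c1 s x + f0 * real (\<Sum>i<n. x i - cur i)"
proof -
  have "(if 0 < (\<Sum>i<n. y i) then f1 else 0) \<le> period_fixed_cost f0 f1 n s x"
    using f1_nonneg f1_le_f0 y by (rule fdc_fixed_cost_le_period_fixed_cost)
  moreover have "f0 \<le> period_fixed_cost f0 f1 n s x + 2 * eta * period_var_cost n c0 c1 s x
         + f0 * real (\<Sum>i<n. x i - cur i)"
    using costs x not_small by (rule f0_le_if_not_small_order)
  ultimately show ?thesis
    unfolding period_fixed_cost_def[of f0 f1 n s y] using f0_nonneg by auto
qed

lemma hat_period_bound:
  assumes costs: "\<And>i. i < n \<Longrightarrow> c0 i \<in> {a..b} \<and> c1 i \<in> {a..b}"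
    and x: "\<And>i. i < n \<Longrightarrow> x i \<le> s i"
    and not_small: "\<not> (real (\<Sum>i<n. s i) \<le> theta \<and> (\<forall>i<n. s i \<le> cur i))"
    and y: "\<And>i. y i = (if c1 i < c0 i / eta then min (s i) (cur i) else 0)"
  shows "period_cost f0 f1 n c0 c1 s y + kappa * real (\<Sum>i<n. y i - x i)
         \<le> 5 * eta * period_cost f0 f1 n c0 c1 s x + kappa * real (\<Sum>i<n. x i - cur i)"
proof -
  define Fx Vx D where "Fx = period_fixed_cost f0 f1 n s x" and "Vx = period_var_cost n c0 c1 s x"
    and "D = real (\<Sum>i<n. x i - cur i)"
  have "y i \<le> s i" for i by (simp add: y)
  with costs x not_small have F: "period_fixed_cost f0 f1 n s y \<le> 2 * Fx + 2 * eta * Vx + f0 * D"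
    unfolding Fx_def Vx_def D_def by (rule hat_fixed_cost_bound)
  from costs x y have V: "period_var_cost n c0 c1 s y + kappa * real (\<Sum>i<n. y i - x i)
      \<le> 3 * eta * Vx + (b - a) * D"
    unfolding Vx_def D_def by (rule hat_var_cost_bound)
  have "2 * Fx \<le> 5 * eta * Fx"
    unfolding Fx_def using eta_ge_1 f0_nonneg f1_nonneg period_fixed_cost_nonneg
    by (intro mult_right_mono) auto
  then have "(2 * Fx + 2 * eta * Vx + f0 * D) + (3 * eta * Vx + (b - a) * D)
      \<le> 5 * eta * (Fx + Vx) + kappa * D"
    by (simp add: algebra_simps)
  then show ?thesis
    using F V unfolding period_cost_def Fx_def Vx_def D_def by linarith
qed

lemma small_order_period_bound:
  assumes costs: "\<And>i. i < n \<Longrightarrow> c0 i \<in> {a..b} \<and> c1 i \<in> {a..b}"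
    and x: "\<And>i. i < n \<Longrightarrow> x i \<le> s i"
    and small: "real (\<Sum>i<n. s i) \<le> theta"
  shows "period_cost f0 f1 n c0 c1 s s + kappa * real (\<Sum>i<n. s i - x i)
         \<le> 5 * eta * period_cost f0 f1 n c0 c1 s x"
proof -
  define Fx Vx U where "Fx = period_fixed_cost f0 f1 n s x" and "Vx = period_var_cost n c0 c1 s x"
    and "U = real (\<Sum>i<n. s i - x i)"
  have "period_fixed_cost f0 f1 n s s = (if 0 < (\<Sum>i<n. s i) then f1 else 0)"
    unfolding period_fixed_cost_def by simp
  also have "\<dots> \<le> Fx"
    unfolding Fx_def using f1_nonneg f1_le_f0 by (rule fdc_fixed_cost_le_period_fixed_cost) simp
  finally have Fs: "period_fixed_cost f0 f1 n s s \<le> Fx" .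
  have Vs: "period_var_cost n c0 c1 s s \<le> Vx + b * U"
    unfolding Vx_def U_def using costs a_pos x by (intro period_var_cost_fdc_all_le) force+
  have nonneg: "0 \<le> Fx" "0 \<le> Vx"
    unfolding Fx_def Vx_def using f0_nonneg f1_nonneg costs
    by (auto intro: period_fixed_cost_nonneg bounded_period_var_cost_nonneg)
  have "(b + kappa) * U \<le> 2 * eta * Fx"
  proof (cases "0 < (\<Sum>i<n. s i - x i)")
    case True
    have "U \<le> real (\<Sum>i<n. s i)"
      unfolding U_def by (intro of_nat_mono sum_mono) simp
    then have "U \<le> theta" using small by linarith
    moreover have "b + kappa \<le> 4 * (eta\<^sup>2 * a)" using b_le f0_le a_pos by linarith
    moreover have "0 \<le> U" unfolding U_def by (rule of_nat_0_le_iff)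
    ultimately have "(b + kappa) * U \<le> 4 * (eta\<^sup>2 * a) * theta"
      using a_pos by (intro mult_mono) simp_all
    also have "\<dots> = 2 * eta * f0"
      using theta_eq a_pos eta_pos by (simp add: power2_eq_square field_simps)
    also have "\<dots> \<le> 2 * eta * Fx"
      using f0_le_period_fixed_cost[OF f1_nonneg True] eta_pos unfolding Fx_def by simp
    finally show ?thesis .
  qed (use nonneg eta_pos in \<open>simp add: U_def\<close>)
  moreover have "Fx \<le> 3 * eta * Fx" "Vx \<le> 5 * eta * Vx"
    using nonneg eta_ge_1 by (intro le_mult_of_one_le; simp)+
  ultimately have "Fx + Vx + (b + kappa) * U \<le> 5 * eta * (Fx + Vx)"
    by (simp add: algebra_simps)
  moreover have "period_cost f0 f1 n c0 c1 s s + kappa * U \<le> Fx + Vx + (b + kappa) * U"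
    using Fs Vs unfolding period_cost_def by (simp add: algebra_simps)
  ultimately show ?thesis
    unfolding period_cost_def Fx_def Vx_def U_def by linarith
qed

lemma osa_period_bound:
  fixes cur :: "nat \<Rightarrow> nat"
  assumes costs: "\<And>i. i < n \<Longrightarrow> c 0 t i \<in> {a..b} \<and> c 1 t i \<in> {a..b}"
    and x: "\<And>i. i < n \<Longrightarrow> x i \<le> S t i"
  defines "y \<equiv> osa_m1 eta theta n S c cur t"
  shows "period_cost f0 f1 n (c 0 t) (c 1 t) (S t) y + kappa * real (\<Sum>i<n. y i - x i)
         \<le> 5 * eta * period_cost f0 f1 n (c 0 t) (c 1 t) (S t) x
            + kappa * real (\<Sum>i<n. x i - cur i)"
proof (cases "real (\<Sum>i<n. S t i) \<le> theta \<and> (\<forall>i<n. S t i \<le> cur i)")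
  case True
  then have y: "y = S t" by (simp add: y_def osa_m1_def fun_eq_iff)
  have "0 \<le> kappa * real (\<Sum>i<n. x i - cur i)"
    using a_le_b f0_nonneg by (intro mult_nonneg_nonneg of_nat_0_le_iff) simp
  moreover from costs x True
  have "period_cost f0 f1 n (c 0 t) (c 1 t) (S t) (S t) + kappa * real (\<Sum>i<n. S t i - x i)
      \<le> 5 * eta * period_cost f0 f1 n (c 0 t) (c 1 t) (S t) x"
    by (intro small_order_period_bound) auto
  ultimately show ?thesis unfolding y by linarith
next
  case False
  have "y i = (if c 1 t i < c 0 t i / eta then min (S t i) (cur i) else 0)" for i
    unfolding y_def osa_m1_def hat_m1_def by (rule if_not_P[OF False])
  with costs x False show ?thesis
    by (rule hat_period_bound)
qed

lemma osa_cost_le_plan_cost: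
  assumes costs: "\<And>k t i. k \<in> {0, 1} \<Longrightarrow> t \<in> {1..T} \<Longrightarrow> i < n \<Longrightarrow> c k t i \<in> {a..b}"
    and m: "feasible n T I0 S m"
  shows "osa_cost eta theta f0 f1 n T I0 S c \<le> 5 * eta * plan_cost f0 f1 n T c m"
proof -
  define y stock where "y = osa_plan eta theta n I0 S c 1" and "stock = osa_inv eta theta n I0 S c"
  define P where "P x t = period_cost f0 f1 n (c 0 t) (c 1 t) (S t) x" for x t
  define U D where "U t = (\<Sum>i<n. y t i - m 1 t i)" and "D t = (\<Sum>i<n. m 1 t i - stock (t - 1) i)"
    for t
  have "m 1 t i \<le> S t i" if "t \<in> {1..T}" "i < n" for t i
    using m that unfolding feasible_def by (metis le_add2)
  then have "P (y t) t + kappa * real (U t) \<le> 5 * eta * P (m 1 t) t + kappa * real (D t)"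
    if "t \<in> {1..T}" for t
    unfolding P_def U_def D_def y_def stock_def osa_plan_fdc
    using costs that by (intro osa_period_bound) auto
  then have "(\<Sum>t\<in>{1..T}. P (y t) t + kappa * real (U t))
      \<le> (\<Sum>t\<in>{1..T}. 5 * eta * P (m 1 t) t + kappa * real (D t))"
    by (rule sum_mono)
  then have "(\<Sum>t\<in>{1..T}. P (y t) t) + kappa * real (\<Sum>t\<in>{1..T}. U t)
      \<le> 5 * eta * (\<Sum>t\<in>{1..T}. P (m 1 t) t) + kappa * real (\<Sum>t\<in>{1..T}. D t)"
    by (simp add: sum.distrib sum_distrib_left)
  moreover have "kappa * real (\<Sum>t\<in>{1..T}. D t) \<le> kappa * real (\<Sum>t\<in>{1..T}. U t)"
    using osa_shortfall_le_excess[OF m] a_le_b f0_nonneg unfolding U_def D_def y_def stock_def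
    by (intro mult_left_mono of_nat_mono) auto
  ultimately have "(\<Sum>t\<in>{1..T}. P (y t) t) \<le> 5 * eta * (\<Sum>t\<in>{1..T}. P (m 1 t) t)"
    by linarith
  then show ?thesis
    unfolding osa_cost_def P_def y_def
    using plan_cost_eq_sum_period_cost[OF osa_plan_feasible] plan_cost_eq_sum_period_cost[OF m]
    by simp
qed

lemma osa_cost_le_opt_cost:
  assumes "\<And>k t i. k \<in> {0, 1} \<Longrightarrow> t \<in> {1..T} \<Longrightarrow> i < n \<Longrightarrow> c k t i \<in> {a..b}"
  shows "osa_cost eta theta f0 f1 n T I0 S c \<le> 5 * eta * opt_cost f0 f1 n T I0 S c"
  using eta_pos assms by (intro le_mult_opt_cost osa_cost_le_plan_cost) auto

end

theorem theorem6:
  fixes a b f0 f1 eta theta :: real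
  assumes "0 < a" and "a < b" and "0 \<le> f1" and "f1 \<le> f0"
    and "eta = sqrt (max (f0 / 2) b / a)"
    and "theta = f0 / (2 * a * eta)"
  shows "\<forall>(n::nat) (T::nat) (I0::nat \<Rightarrow> nat) (S::nat \<Rightarrow> nat \<Rightarrow> nat) (c::nat \<Rightarrow> nat \<Rightarrow> nat \<Rightarrow> real).
           (\<forall>k\<in>{0::nat,1}. \<forall>t\<in>{1..T}. \<forall>i<n. a \<le> c k t i \<and> c k t i \<le> b) \<longrightarrow>
           osa_cost eta theta f0 f1 n T I0 S c
             \<le> (4 + sqrt 2) * sqrt (max (f0 / 2) b / a) * opt_cost f0 f1 n T I0 S c"
proof (intro allI impI)
  fix n T :: nat and I0 :: "nat \<Rightarrow> nat" and S :: "nat \<Rightarrow> nat \<Rightarrow> nat"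
    and c :: "nat \<Rightarrow> nat \<Rightarrow> nat \<Rightarrow> real"
  assume costs: "\<forall>k\<in>{0::nat,1}. \<forall>t\<in>{1..T}. \<forall>i<n. a \<le> c k t i \<and> c k t i \<le> b"
  have "1 \<le> max (f0 / 2) b / a" using assms(1,2) by (simp add: le_divide_eq)
  then have eta_sq: "eta\<^sup>2 * a = max (f0 / 2) b" and "1 \<le> eta"
    using assms(1,5) by simp_all
  interpret adjv_parameters a b f0 f1 eta theta
    using assms eta_sq \<open>1 \<le> eta\<close> by unfold_locales auto
  have "osa_cost eta theta f0 f1 n T I0 S c \<le> 5 * eta * opt_cost f0 f1 n T I0 S c"
    using costs by (intro osa_cost_le_opt_cost) auto
  also have "\<dots> \<le> (4 + sqrt 2) * eta * opt_cost f0 f1 n T I0 S c"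
    using costs eta_pos f0_nonneg f1_nonneg a_pos
    by (intro mult_right_mono opt_cost_nonneg) force+
  finally show "osa_cost eta theta f0 f1 n T I0 S c
      \<le> (4 + sqrt 2) * sqrt (max (f0 / 2) b / a) * opt_cost f0 f1 n T I0 S c"
    unfolding assms(5) .
qed

end
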